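(* Let $\ell,m,n\in\mathbb{N}$, $\mathbf{p}_1,\dots,\mathbf{p}_m\in\mathrm{Prob}(n)$ and $\mathbf{s}\in\mathrm{Prob}(\ell)$. Then $$H\Big(\bigvee_{x\in[m]}(\mathbf{p}_x\otimes\mathbf{s})\Big)\le\log\ell+H\Big(\bigvee_{x\in[m]}\mathbf{p}_x\Big),$$ where $H$ is the Shannon entropy.
   Context: $H(\mathbf{p})=-\sum_i p_i\log p_i$. For $\mathbf{p},\mathbf{q}\in\mathrm{Prob}(N)$, $\mathbf{p}\succ\mathbf{q}$ means the sum of the $k$ largest entries of $\mathbf{p}$ is at least that of $\mathbf{q}$ for all $k$. For a finite set $\{\mathbf{a}_x\}\subset\mathrm{Prob}(N)$, $\bigvee_x\mathbf{a}_x$ denotes its optimal upper bound: the unique $\mathbf{q}\in\mathrm{Prob}^{\downarrow}(N)$ (non-increasing entries) with $\mathbf{q}\succ\mathbf{a}_x$ for all $x$ such that every $\mathbf{p}\in\mathrm{Prob}(N)$ with $\mathbf{p}\succ\mathbf{a}_x$ for all $x$ satisfies $\mathbf{p}\succ\mathbf{q}$. *)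

theory Defs
  imports Complex_Main
begin

text \<open>Probability vectors of length N are represented as functions nat \<Rightarrow> real,
  whose entries at indices 0..N-1 are the components.\<close>

definition Prob :: "nat \<Rightarrow> (nat \<Rightarrow> real) set" where
  "Prob N = {p. (\<forall>i<N. 0 \<le> p i) \<and> (\<Sum>i<N. p i) = 1}"

definition Prob_dec :: "nat \<Rightarrow> (nat \<Rightarrow> real) set" where
  "Prob_dec N = {p. p \<in> Prob N \<and> (\<forall>i j. i \<le> j \<and> j < N \<longrightarrow> p j \<le> p i)}"

definition topk :: "nat \<Rightarrow> (nat \<Rightarrow> real) \<Rightarrow> nat \<Rightarrow> real" where
  "topk N p k = Max {sum p S | S. S \<subseteq> {..<N} \<and> card S = k}"

definition majorizes :: "nat \<Rightarrow> (nat \<Rightarrow> real) \<Rightarrow> (nat \<Rightarrow> real) \<Rightarrow> bool" where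
  "majorizes N p q \<longleftrightarrow> (\<forall>k\<le>N. topk N q k \<le> topk N p k)"

text \<open>Optimal upper bound (join) of a set A of vectors in Prob(N); the
  representative is normalised to vanish outside {..<N}.\<close>
definition join :: "nat \<Rightarrow> (nat \<Rightarrow> real) set \<Rightarrow> (nat \<Rightarrow> real)" where
  "join N A = (THE q. q \<in> Prob_dec N \<and> (\<forall>i\<ge>N. q i = 0)
      \<and> (\<forall>a\<in>A. majorizes N q a)
      \<and> (\<forall>p\<in>Prob N. (\<forall>a\<in>A. majorizes N p a) \<longrightarrow> majorizes N p q))"

definition entropy :: "nat \<Rightarrow> (nat \<Rightarrow> real) \<Rightarrow> real" where
  "entropy N p = - (\<Sum>i<N. p i * ln (p i))"

text \<open>Tensor product p \<otimes> s with s of length l: entry (i,j) at index i*l+j.\<close>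
definition tensor :: "nat \<Rightarrow> (nat \<Rightarrow> real) \<Rightarrow> (nat \<Rightarrow> real) \<Rightarrow> (nat \<Rightarrow> real)" where
  "tensor l p s = (\<lambda>k. p (k div l) * s (k mod l))"

end

theory Submission
  imports Defs
begin

text \<open>Let \<open>Q\<close> be the join of the vectors \<open>p\<^sub>x \<otimes> s\<close> and let \<open>R\<close> be its coarse-graining, obtained by
  summing \<open>Q\<close> over consecutive blocks of length \<open>l\<close>. Since \<open>Q\<close> is sorted, its \<open>kl\<close> largest entries
  fill the first \<open>k\<close> blocks; as the \<open>kl\<close> largest entries of \<open>p\<^sub>x \<otimes> s\<close> carry at least the mass of
  the \<open>k\<close> largest entries of \<open>p\<^sub>x\<close>, \<open>R\<close> majorizes every \<open>p\<^sub>x\<close> and hence their join \<open>P\<close>, so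
  \<open>H(R) \<le> H(P)\<close> by Schur concavity. Conversely, spreading each \<open>R\<^sub>i\<close> uniformly over its block gives
  a vector majorized by \<open>Q\<close> (a sorted block majorizes its average) whose entropy is
  \<open>H(R) + log l\<close>.\<close>

lemma sum_lessThan_split: "m \<le> n \<Longrightarrow> sum f {..<n} = sum f {..<m} + sum f {m..<n::nat}"
  using sum.atLeastLessThan_concat[of 0 m n f] by (simp add: atLeast0LessThan)

lemma sum_lessThan_add: "sum f {..<m + k} = sum f {..<m} + (\<Sum>j<k. f (m + j :: nat))"
  by (induction k) (simp_all add: add_ac)

lemma sum_lessThan_mult: "sum f {..<n * l} = (\<Sum>i<n. \<Sum>j<l. f (i * l + j :: nat))"
proof (induction n)
  case (Suc n)
  then show ?case using sum_lessThan_add[of f "n * l" l] by (simp add: add.commute)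
qed simp

lemma block_index_less:
  assumes "i < n" "j < (l::nat)"
  shows "i * l + j < n * l"
proof -
  have "i * l + j < Suc i * l" using assms(2) by simp
  also have "\<dots> \<le> n * l" using assms(1) by (intro mult_le_mono1) simp
  finally show ?thesis .
qed

lemma Prob_dec_iff: "q \<in> Prob_dec N \<longleftrightarrow> q \<in> Prob N \<and> antimono_on {..<N} q"
  by (auto simp: Prob_dec_def monotone_on_def)

lemma Prob_nonneg: "p \<in> Prob N \<Longrightarrow> i < N \<Longrightarrow> 0 \<le> p i"
  by (simp add: Prob_def)

lemma Prob_sum: "p \<in> Prob N \<Longrightarrow> sum p {..<N} = 1"
  by (simp add: Prob_def)

lemma Prob_length_pos: "p \<in> Prob N \<Longrightarrow> 0 < N"
  by (auto simp: Prob_def intro: Nat.gr0I)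

lemma finite_topk_candidates: "finite {sum p S | S. S \<subseteq> {..<N::nat} \<and> card S = k}"
proof (rule finite_subset)
  show "{sum p S | S. S \<subseteq> {..<N} \<and> card S = k} \<subseteq> sum p ` Pow {..<N}" by auto
qed simp

lemma sum_le_topk: "S \<subseteq> {..<N} \<Longrightarrow> card S = k \<Longrightarrow> sum p S \<le> topk N p k"
  unfolding topk_def by (rule Max_ge[OF finite_topk_candidates]) auto

lemma topk_attained:
  assumes "k \<le> N"
  obtains S where "S \<subseteq> {..<N}" "card S = k" "topk N p k = sum p S"
proof -
  have "{sum p S | S. S \<subseteq> {..<N} \<and> card S = k} \<noteq> {}"
    using assms by (auto intro!: exI[of _ "{..<k}"])
  then have "topk N p k \<in> {sum p S | S. S \<subseteq> {..<N} \<and> card S = k}"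
    unfolding topk_def by (rule Max_in[OF finite_topk_candidates])
  then show ?thesis using that by blast
qed

lemma topk_0 [simp]: "topk N p 0 = 0"
proof -
  obtain S where S: "S \<subseteq> {..<N}" "card S = 0" "topk N p 0 = sum p S"
    by (rule topk_attained[OF le0])
  then have "S = {}" using finite_subset[OF S(1)] by simp
  with S show ?thesis by simp
qed

lemma topk_full: "topk N p N = sum p {..<N}"
proof -
  obtain S where S: "S \<subseteq> {..<N}" "card S = N" "topk N p N = sum p S"
    by (rule topk_attained[OF order_refl])
  then have "S = {..<N}" by (intro card_subset_eq) auto
  with S show ?thesis by simp
qed

lemma topk_nonneg:
  assumes "\<And>i. i < N \<Longrightarrow> 0 \<le> p i" "k \<le> N"
  shows "0 \<le> topk N p k"
proof -
  obtain S where "S \<subseteq> {..<N}" "topk N p k = sum p S"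
    using assms(2) by (rule topk_attained)
  then show ?thesis using assms(1) by (auto intro: sum_nonneg)
qed

lemma topk_le_sum:
  assumes "\<And>i. i < N \<Longrightarrow> 0 \<le> p i" "k \<le> N"
  shows "topk N p k \<le> sum p {..<N}"
proof -
  obtain S where "S \<subseteq> {..<N}" "topk N p k = sum p S"
    using assms(2) by (rule topk_attained)
  then show ?thesis using assms(1) by (auto intro: sum_mono2)
qed

lemma topk_le_topk_Suc:
  assumes "\<And>i. i < N \<Longrightarrow> 0 \<le> p i" "k < N"
  shows "topk N p k \<le> topk N p (Suc k)"
proof -
  obtain T where T: "T \<subseteq> {..<N}" "card T = k" "topk N p k = sum p T"
    using less_imp_le[OF assms(2)] by (rule topk_attained)
  have "finite T" using finite_lessThan T(1) by (rule rev_finite_subset)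
  have "\<not> {..<N} \<subseteq> T"
  proof
    assume "{..<N} \<subseteq> T"
    then have "card {..<N} \<le> card T" by (rule card_mono[OF \<open>finite T\<close>])
    then show False using T(2) assms(2) by simp
  qed
  then obtain x where x: "x < N" "x \<notin> T" by auto
  have "sum p (insert x T) \<le> topk N p (Suc k)"
    using T x \<open>finite T\<close> by (intro sum_le_topk) auto
  then show ?thesis using T(3) x \<open>finite T\<close> assms(1)[of x] by simp
qed

lemma topk_concave:
  assumes "k + 2 \<le> N"
  shows "topk N p k + topk N p (k + 2) \<le> 2 * topk N p (Suc k)"
proof -
  obtain S where S: "S \<subseteq> {..<N}" "card S = k + 2" "topk N p (k + 2) = sum p S"
    using assms by (rule topk_attained)
  have "k \<le> N" using assms by simp
  then obtain T where T: "T \<subseteq> {..<N}" "card T = k" "topk N p k = sum p T"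
    by (rule topk_attained)
  have fin: "finite S" "finite T"
    using finite_lessThan S(1) T(1) by (auto intro: rev_finite_subset)
  have "\<not> S \<subseteq> T"
  proof
    assume "S \<subseteq> T"
    then have "card S \<le> card T" by (rule card_mono[OF fin(2)])
    then show False using S(2) T(2) by simp
  qed
  then obtain x where x: "x \<in> S" "x \<notin> T" by auto
  have "sum p (S - {x}) \<le> topk N p (Suc k)"
    using S x fin by (intro sum_le_topk) auto
  moreover have "sum p (insert x T) \<le> topk N p (Suc k)"
    using S T x fin by (intro sum_le_topk) auto
  ultimately show ?thesis
    using S(3) T(3) x fin by (simp add: sum_diff1)
qed

lemma sum_le_sum_of_card_eq_separated:
  fixes f :: "'a \<Rightarrow> real"
  assumes "card A = card B" "\<And>a. a \<in> A \<Longrightarrow> f a \<le> c" "\<And>b. b \<in> B \<Longrightarrow> c \<le> f b"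
  shows "sum f A \<le> sum f B"
proof -
  have "sum f A \<le> of_nat (card A) * c" using assms(2) by (rule sum_bounded_above)
  also have "\<dots> \<le> sum f B" using assms(1,3) sum_bounded_below[of B c f] by simp
  finally show ?thesis .
qed

lemma topk_eq_sum_lessThan:
  assumes dec: "antimono_on {..<N} q" and "k \<le> N"
  shows "topk N q k = sum q {..<k}"
proof -
  obtain S where S: "S \<subseteq> {..<N}" "card S = k" "topk N q k = sum q S"
    using assms(2) by (rule topk_attained)
  have fin: "finite S" using finite_lessThan S(1) by (rule rev_finite_subset)
  have "sum q S \<le> sum q {..<k}"
  proof (cases "k = N")
    case True
    then have "S = {..<k}" using S by (intro card_subset_eq) auto
    then show ?thesis by simp
  next
    case False
    have "card (S - {..<k}) = card ({..<k} - S)"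
      using fin S(2) by (simp add: card_Diff_subset_Int Int_commute)
    moreover have "q i \<le> q k" if "i \<in> S - {..<k}" for i
      using that S(1) False assms(2) by (intro monotone_onD[OF dec]) auto
    moreover have "q k \<le> q i" if "i \<in> {..<k} - S" for i
      using that False assms(2) by (intro monotone_onD[OF dec]) auto
    ultimately have "sum q (S - {..<k}) \<le> sum q ({..<k} - S)"
      by (rule sum_le_sum_of_card_eq_separated)
    then show ?thesis
      using sum.Int_Diff[OF fin, of q "{..<k}"] sum.Int_Diff[of "{..<k}" q S]
      by (simp add: Int_commute)
  qed
  moreover have "sum q {..<k} \<le> topk N q k" using assms(2) by (intro sum_le_topk) auto
  ultimately show ?thesis using S(3) by linarith
qed

definition is_join :: "nat \<Rightarrow> (nat \<Rightarrow> real) set \<Rightarrow> (nat \<Rightarrow> real) \<Rightarrow> bool" where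
  "is_join N A q \<longleftrightarrow> q \<in> Prob_dec N \<and> (\<forall>i\<ge>N. q i = 0) \<and> (\<forall>a\<in>A. majorizes N q a)
      \<and> (\<forall>p\<in>Prob N. (\<forall>a\<in>A. majorizes N p a) \<longrightarrow> majorizes N p q)"

lemma is_join_unique:
  assumes "is_join N A q" "is_join N A q'"
  shows "q = q'"
proof
  fix i
  have dec: "antimono_on {..<N} q" "antimono_on {..<N} q'"
    using assms by (auto simp: is_join_def Prob_dec_iff)
  have "majorizes N q q'" "majorizes N q' q"
    using assms by (auto simp: is_join_def Prob_dec_def)
  then have "topk N q k = topk N q' k" if "k \<le> N" for k
    using that by (simp add: majorizes_def order_antisym)
  then have partial_sums: "sum q {..<k} = sum q' {..<k}" if "k \<le> N" for k
    using that topk_eq_sum_lessThan[OF dec(1) that] topk_eq_sum_lessThan[OF dec(2) that] by simp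
  show "q i = q' i"
  proof (cases "i < N")
    case True
    then show ?thesis using partial_sums[of i] partial_sums[of "Suc i"] by simp
  next
    case False
    then show ?thesis using assms by (simp add: is_join_def)
  qed
qed

text \<open>The join exists because its Lorenz curve \<open>topk N (join N A)\<close> can be constructed as the
  pointwise least Lorenz majorant of \<open>A\<close>; the join itself is then the sequence of increments
  of that curve.\<close>

definition lorenz_majorant :: "nat \<Rightarrow> (nat \<Rightarrow> real) set \<Rightarrow> (nat \<Rightarrow> real) \<Rightarrow> bool" where
  "lorenz_majorant N A G \<longleftrightarrow>
     (\<forall>k. k + 2 \<le> N \<longrightarrow> G k + G (k + 2) \<le> 2 * G (Suc k)) \<and> (\<forall>k<N. G k \<le> G (Suc k)) \<and>
     (\<forall>k\<le>N. 0 \<le> G k) \<and> 1 \<le> G N \<and> (\<forall>a\<in>A. \<forall>k\<le>N. topk N a k \<le> G k)"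

definition lorenz_envelope :: "nat \<Rightarrow> (nat \<Rightarrow> real) set \<Rightarrow> nat \<Rightarrow> real" where
  "lorenz_envelope N A k = (INF G \<in> Collect (lorenz_majorant N A). G k)"

lemma lorenz_majorant_step:
  assumes "1 \<le> N" "A \<subseteq> Prob N"
  shows "lorenz_majorant N A (\<lambda>k. if k = 0 then 0 else 1)"
proof -
  have "topk N a k \<le> (if k = 0 then 0 else 1)" if "a \<in> A" "k \<le> N" for a k
    using that assms topk_le_sum[of N a k] by (auto simp: Prob_nonneg Prob_sum)
  then show ?thesis using assms(1) unfolding lorenz_majorant_def by auto
qed

lemma lorenz_majorant_topk:
  assumes "p \<in> Prob N" "\<forall>a\<in>A. majorizes N p a"
  shows "lorenz_majorant N A (topk N p)"
proof -
  have nonneg: "\<And>i. i < N \<Longrightarrow> 0 \<le> p i" using assms(1) by (rule Prob_nonneg)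
  have "topk N a k \<le> topk N p k" if "a \<in> A" "k \<le> N" for a k
    using assms(2) that by (simp add: majorizes_def)
  then show ?thesis
    using topk_concave[of _ N p] topk_le_topk_Suc[OF nonneg] topk_nonneg[OF nonneg]
      Prob_sum[OF assms(1)]
    unfolding lorenz_majorant_def by (simp add: topk_full)
qed

lemma lorenz_envelope_le:
  assumes "lorenz_majorant N A G" "k \<le> N"
  shows "lorenz_envelope N A k \<le> G k"
  unfolding lorenz_envelope_def
proof (rule cINF_lower)
  show "bdd_below ((\<lambda>G. G k) ` Collect (lorenz_majorant N A))"
    using assms(2) by (intro bdd_belowI[of _ 0]) (auto simp: lorenz_majorant_def)
qed (use assms(1) in simp)

lemma le_lorenz_envelope:
  assumes "lorenz_majorant N A G0" "\<And>G. lorenz_majorant N A G \<Longrightarrow> c \<le> G k"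
  shows "c \<le> lorenz_envelope N A k"
  unfolding lorenz_envelope_def using assms by (intro cINF_greatest) auto

text \<open>Every defining condition of a Lorenz majorant is preserved under pointwise infima.\<close>

lemma lorenz_majorant_envelope:
  assumes "1 \<le> N" "A \<subseteq> Prob N"
  shows "lorenz_majorant N A (lorenz_envelope N A)"
proof -
  let ?F = "lorenz_envelope N A"
  note step = lorenz_majorant_step[OF assms]
  have "?F k + ?F (k + 2) \<le> 2 * ?F (Suc k)" if "k + 2 \<le> N" for k
  proof -
    have "(?F k + ?F (k + 2)) / 2 \<le> ?F (Suc k)"
    proof (rule le_lorenz_envelope[OF step])
      fix G assume G: "lorenz_majorant N A G"
      then have "?F k + ?F (k + 2) \<le> G k + G (k + 2)"
        using lorenz_envelope_le[OF G] that by (simp add: add_mono)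
      also have "\<dots> \<le> 2 * G (Suc k)" using G that by (simp add: lorenz_majorant_def)
      finally show "(?F k + ?F (k + 2)) / 2 \<le> G (Suc k)" by simp
    qed
    then show ?thesis by simp
  qed
  moreover have "?F k \<le> ?F (Suc k)" if "k < N" for k
  proof (rule le_lorenz_envelope[OF step])
    fix G assume G: "lorenz_majorant N A G"
    have "?F k \<le> G k" using lorenz_envelope_le[OF G] that by simp
    also have "\<dots> \<le> G (Suc k)" using G that by (simp add: lorenz_majorant_def)
    finally show "?F k \<le> G (Suc k)" .
  qed
  moreover have "0 \<le> ?F k" if "k \<le> N" for k
    using that by (intro le_lorenz_envelope[OF step]) (simp add: lorenz_majorant_def)
  moreover have "1 \<le> ?F N"
    by (intro le_lorenz_envelope[OF step]) (simp add: lorenz_majorant_def)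
  moreover have "topk N a k \<le> ?F k" if "a \<in> A" "k \<le> N" for a k
    using that by (intro le_lorenz_envelope[OF step]) (simp add: lorenz_majorant_def)
  ultimately show ?thesis unfolding lorenz_majorant_def by blast
qed

lemma lorenz_envelope_0:
  assumes "1 \<le> N" "A \<subseteq> Prob N"
  shows "lorenz_envelope N A 0 = 0"
proof (rule order_antisym)
  show "lorenz_envelope N A 0 \<le> 0"
    using lorenz_envelope_le[OF lorenz_majorant_step[OF assms], of 0] by simp
  show "0 \<le> lorenz_envelope N A 0"
    using lorenz_majorant_envelope[OF assms] by (simp add: lorenz_majorant_def)
qed

definition increments :: "nat \<Rightarrow> (nat \<Rightarrow> real) \<Rightarrow> nat \<Rightarrow> real" where
  "increments N G i = (if i < N then G (Suc i) - G i else 0)"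

lemma sum_increments: "k \<le> N \<Longrightarrow> sum (increments N G) {..<k} = G k - G 0"
  by (simp add: increments_def sum_lessThan_telescope)

lemma antimono_increments:
  assumes "\<forall>k. k + 2 \<le> N \<longrightarrow> G k + G (k + 2) \<le> 2 * G (Suc k)"
  shows "antimono_on {..<N} (increments N G)"
proof -
  have "increments N G j \<le> increments N G i" if "i \<le> j" "j < N" for i j
    using that
  proof (induction j rule: dec_induct)
    case (step j)
    then have "increments N G (Suc j) \<le> increments N G j"
      using assms[rule_format, of j] by (simp add: increments_def)
    with step show ?case by simp
  qed simp
  then show ?thesis by (intro monotone_onI) auto
qed

lemma is_join_increments_envelope:
  assumes "1 \<le> N" "A \<subseteq> Prob N"
  shows "is_join N A (increments N (lorenz_envelope N A))"
proof -
  let ?F = "lorenz_envelope N A" and ?q = "increments N (lorenz_envelope N A)"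
  have F: "lorenz_majorant N A ?F" by (rule lorenz_majorant_envelope[OF assms])
  have dec: "antimono_on {..<N} ?q"
    using F by (intro antimono_increments) (simp add: lorenz_majorant_def)
  have sums: "sum ?q {..<k} = ?F k" if "k \<le> N" for k
    using sum_increments[OF that] lorenz_envelope_0[OF assms] by simp
  have topk_q: "topk N ?q k = ?F k" if "k \<le> N" for k
    using topk_eq_sum_lessThan[OF dec that] sums[OF that] by simp
  have "?F N = 1"
    using lorenz_envelope_le[OF lorenz_majorant_step[OF assms], of N] F assms(1)
    by (simp add: lorenz_majorant_def)
  moreover have "0 \<le> ?q i" for i
    using F by (simp add: increments_def lorenz_majorant_def)
  ultimately have "?q \<in> Prob_dec N"
    using dec sums[of N] by (simp add: Prob_dec_iff Prob_def)
  moreover have "majorizes N ?q a" if "a \<in> A" for a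
    using that F topk_q by (simp add: majorizes_def lorenz_majorant_def)
  moreover have "majorizes N p ?q" if "p \<in> Prob N" "\<forall>a\<in>A. majorizes N p a" for p
    using lorenz_envelope_le[OF lorenz_majorant_topk[OF that]] topk_q
    by (simp add: majorizes_def)
  ultimately show ?thesis by (simp add: is_join_def increments_def)
qed

lemma is_join_join:
  assumes "1 \<le> N" "A \<subseteq> Prob N"
  shows "is_join N A (join N A)"
proof -
  note q = is_join_increments_envelope[OF assms]
  have "join N A = (THE q. is_join N A q)"
    by (simp add: join_def is_join_def)
  then show ?thesis
    using theI[of "is_join N A", OF q is_join_unique[OF _ q]] by simp
qed

lemma xlnx_tangent:
  fixes x y :: real
  assumes "0 \<le> x" "0 < y"
  shows "(ln y + 1) * (x - y) \<le> x * ln x - y * ln y"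
proof (cases "x = 0")
  case True
  then show ?thesis using assms by (simp add: algebra_simps)
next
  case False
  with assms have x: "0 < x" by simp
  have "ln y - ln x \<le> y / x - 1"
    using ln_le_minus_one[of "y / x"] x assms by (simp add: ln_div)
  then have "x * (ln y - ln x) \<le> x * (y / x - 1)"
    using x by (intro mult_left_mono) auto
  then show ?thesis using x by (simp add: algebra_simps)
qed

lemma summation_by_parts_lower_bound:
  fixes c d :: "nat \<Rightarrow> real"
  assumes "antimono_on {..<r} c" "\<And>k. k \<le> r \<Longrightarrow> 0 \<le> sum d {..<k}" "t < r"
  shows "c t * sum d {..<Suc t} \<le> (\<Sum>i<Suc t. c i * d i)"
  using assms(3)
proof (induction t)
  case (Suc t)
  have "c (Suc t) \<le> c t" using Suc.prems by (intro monotone_onD[OF assms(1)]) auto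
  moreover have "0 \<le> sum d {..<Suc t}" using Suc.prems by (intro assms(2)) simp
  ultimately have "c (Suc t) * sum d {..<Suc t} \<le> c t * sum d {..<Suc t}"
    by (rule mult_right_mono)
  with Suc.IH Suc.prems show ?case by (simp add: algebra_simps)
qed simp

lemma antimono_support_prefix:
  fixes R :: "nat \<Rightarrow> real"
  assumes dec: "antimono_on {..<N} R" and nonneg: "\<And>i. i < N \<Longrightarrow> 0 \<le> R i"
  obtains r where "r \<le> N" "\<And>i. i < r \<Longrightarrow> 0 < R i" "\<And>i. r \<le> i \<Longrightarrow> i < N \<Longrightarrow> R i = 0"
proof -
  define r where "r = (LEAST i. i < N \<longrightarrow> R i = 0)"
  have "r \<le> N" unfolding r_def by (rule Least_le) simp
  moreover have "0 < R i" if "i < r" for i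
    using not_less_Least[OF that[unfolded r_def]] nonneg[of i] by auto
  moreover have "R i = 0" if "r \<le> i" "i < N" for i
  proof -
    have "R r = 0" using LeastI[of "\<lambda>i. i < N \<longrightarrow> R i = 0" N] that by (simp add: r_def)
    moreover have "R i \<le> R r" using that by (intro monotone_onD[OF dec]) auto
    ultimately show ?thesis using nonneg[OF that(2)] by simp
  qed
  ultimately show thesis by (rule that)
qed

text \<open>By convexity of \<open>x ln x\<close> it suffices to show \<open>\<Sum>\<^sub>i (ln R\<^sub>i + 1)(Q\<^sub>i - R\<^sub>i) \<ge> 0\<close> over
  the support of \<open>R\<close>, which holds by summation by parts: the weights \<open>ln R\<^sub>i + 1\<close> decrease,
  and the partial sums of \<open>Q - R\<close> are nonnegative and vanish at the end of the support (beyond which \<open>Q\<close> vanishes as well).\<close>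

lemma entropy_le_if_majorizes:
  assumes Q: "Q \<in> Prob_dec N" and R: "R \<in> Prob_dec N" and maj: "majorizes N Q R"
  shows "entropy N Q \<le> entropy N R"
proof -
  have decQ: "antimono_on {..<N} Q" and decR: "antimono_on {..<N} R"
    using Q R by (auto simp: Prob_dec_iff)
  have nonnegQ: "\<And>i. i < N \<Longrightarrow> 0 \<le> Q i" and nonnegR: "\<And>i. i < N \<Longrightarrow> 0 \<le> R i"
    using Q R by (auto simp: Prob_dec_iff Prob_nonneg)
  have partial_sums: "sum R {..<k} \<le> sum Q {..<k}" if "k \<le> N" for k
  proof -
    have "topk N R k \<le> topk N Q k" using maj that by (simp add: majorizes_def)
    then show ?thesis using topk_eq_sum_lessThan[OF decQ that] topk_eq_sum_lessThan[OF decR that] by simp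
  qed
  obtain r where r: "r \<le> N" "\<And>i. i < r \<Longrightarrow> 0 < R i" "\<And>i. r \<le> i \<Longrightarrow> i < N \<Longrightarrow> R i = 0"
    using antimono_support_prefix[OF decR nonnegR] by blast
  note split = sum_lessThan_split[OF r(1)]
  have mass_R: "sum R {..<r} = 1"
    using split[of R] r(3) R by (simp add: Prob_dec_iff Prob_sum)
  have "0 \<le> sum Q {r..<N}" using nonnegQ by (intro sum_nonneg) auto
  then have mass_Q: "sum Q {..<r} = 1" and "sum Q {r..<N} = 0"
    using split[of Q] partial_sums[OF r(1)] mass_R Q by (auto simp: Prob_dec_iff Prob_sum)
  then have Q_tail: "Q i = 0" if "r \<le> i" "i < N" for i
    using nonnegQ that sum_nonneg_eq_0_iff[of "{r..<N}" Q] by auto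
  define c where "c i = ln (R i) + 1" for i
  define d where "d i = Q i - R i" for i
  have "0 \<le> (\<Sum>i<r. c i * d i)"
  proof (cases r)
    case (Suc t)
    have "antimono_on {..<r} c"
      using r(1,2) by (intro monotone_onI) (auto simp: c_def intro: monotone_onD[OF decR])
    moreover have "0 \<le> sum d {..<k}" if "k \<le> r" for k
      using partial_sums[of k] that r(1) by (simp add: d_def sum_subtractf)
    ultimately have "c t * sum d {..<r} \<le> (\<Sum>i<r. c i * d i)"
      using summation_by_parts_lower_bound[of r c d t] Suc by simp
    moreover have "sum d {..<r} = 0" using mass_Q mass_R by (simp add: d_def sum_subtractf)
    ultimately show ?thesis by simp
  qed simp
  also have "\<dots> \<le> (\<Sum>i<r. Q i * ln (Q i) - R i * ln (R i))"
    using r nonnegQ by (intro sum_mono) (auto simp: c_def d_def intro: xlnx_tangent)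
  also have "\<dots> = (\<Sum>i<N. Q i * ln (Q i) - R i * ln (R i))"
    using split[of "\<lambda>i. Q i * ln (Q i) - R i * ln (R i)"] Q_tail r(3) by simp
  finally show ?thesis unfolding entropy_def by (simp add: sum_subtractf)
qed

definition coarse_grain :: "nat \<Rightarrow> (nat \<Rightarrow> real) \<Rightarrow> nat \<Rightarrow> real" where
  "coarse_grain l Q i = (\<Sum>j<l. Q (i * l + j))"

definition refine :: "nat \<Rightarrow> (nat \<Rightarrow> real) \<Rightarrow> nat \<Rightarrow> real" where
  "refine l R k = R (k div l) / l"

lemma sum_coarse_grain: "sum (coarse_grain l Q) {..<k} = sum Q {..<k * l}"
  by (simp add: coarse_grain_def sum_lessThan_mult)

lemma antimono_coarse_grain:
  assumes dec: "antimono_on {..<n * l} Q"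
  shows "antimono_on {..<n} (coarse_grain l Q)"
proof (rule monotone_onI)
  fix i j assume "i \<in> {..<n}" "j \<in> {..<n}" "i \<le> j"
  then have "Q (j * l + t) \<le> Q (i * l + t)" if "t < l" for t
    using that block_index_less[of j n t l] block_index_less[of i n t l]
    by (intro monotone_onD[OF dec]) auto
  then show "coarse_grain l Q j \<le> coarse_grain l Q i"
    unfolding coarse_grain_def by (intro sum_mono) simp
qed

lemma coarse_grain_Prob_dec:
  assumes "Q \<in> Prob_dec (n * l)"
  shows "coarse_grain l Q \<in> Prob_dec n"
proof -
  have "0 \<le> coarse_grain l Q i" if "i < n" for i
    using assms that block_index_less[of i n _ l]
    by (auto simp: coarse_grain_def Prob_dec_iff Prob_nonneg intro: sum_nonneg)
  then show ?thesis
    using assms antimono_coarse_grain[of n l Q] sum_coarse_grain[of l Q n]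
    by (simp add: Prob_dec_iff Prob_def)
qed

lemma tensor_Prob:
  assumes "p \<in> Prob n" "s \<in> Prob l"
  shows "tensor l p s \<in> Prob (n * l)"
proof -
  have "0 < l" using assms(2) by (rule Prob_length_pos)
  have "0 \<le> tensor l p s k" if "k < n * l" for k
  proof -
    have "k div l < n" "k mod l < l"
      using that \<open>0 < l\<close> by (simp_all add: less_mult_imp_div_less)
    then show ?thesis using assms by (simp add: tensor_def Prob_nonneg)
  qed
  moreover have "sum (tensor l p s) {..<n * l} = (\<Sum>i<n. p i * sum s {..<l})"
    by (simp add: sum_lessThan_mult tensor_def sum_distrib_left)
  ultimately show ?thesis using assms by (simp add: Prob_def)
qed

lemma topk_le_topk_tensor:
  assumes "s \<in> Prob l" "k \<le> n"
  shows "topk n p k \<le> topk (n * l) (tensor l p s) (k * l)"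
proof -
  obtain S where S: "S \<subseteq> {..<n}" "card S = k" "topk n p k = sum p S"
    using assms(2) by (rule topk_attained)
  have "finite S" using finite_lessThan S(1) by (rule rev_finite_subset)
  define h where "h = (\<lambda>(i, j). i * l + j)"
  have inj: "inj_on h (S \<times> {..<l})"
  proof (rule inj_onI)
    fix u v assume "u \<in> S \<times> {..<l}" "v \<in> S \<times> {..<l}" "h u = h v"
    then obtain i j i' j' where uv: "u = (i, j)" "v = (i', j')" "j < l" "j' < l"
      and eq: "i * l + j = i' * l + j'"
      by (auto simp: h_def)
    have "i = i'" using arg_cong[OF eq, of "\<lambda>x. x div l"] uv by simp
    moreover have "j = j'" using arg_cong[OF eq, of "\<lambda>x. x mod l"] uv by simp
    ultimately show "u = v" using uv by simp
  qed
  have "h ` (S \<times> {..<l}) \<subseteq> {..<n * l}"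
    using S(1) block_index_less by (auto simp: h_def)
  moreover have "card (h ` (S \<times> {..<l})) = k * l"
    using card_image[OF inj] S(2) \<open>finite S\<close> by (simp add: card_cartesian_product)
  ultimately have "sum (tensor l p s) (h ` (S \<times> {..<l})) \<le> topk (n * l) (tensor l p s) (k * l)"
    by (rule sum_le_topk)
  moreover have "sum (tensor l p s) (h ` (S \<times> {..<l})) = sum p S"
  proof -
    have "sum (tensor l p s) (h ` (S \<times> {..<l})) = (\<Sum>u\<in>S \<times> {..<l}. tensor l p s (h u))"
      by (simp add: sum.reindex[OF inj])
    also have "\<dots> = (\<Sum>u\<in>S \<times> {..<l}. p (fst u) * s (snd u))"
      by (intro sum.cong refl) (auto simp: h_def tensor_def)
    also have "\<dots> = (\<Sum>i\<in>S. \<Sum>j<l. p i * s j)"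
      by (simp add: sum.cartesian_product case_prod_beta)
    also have "\<dots> = (\<Sum>i\<in>S. p i * sum s {..<l})"
      by (simp add: sum_distrib_left)
    finally show ?thesis using assms(1) by (simp add: Prob_sum)
  qed
  ultimately show ?thesis using S(3) by simp
qed

lemma coarse_grain_majorizes:
  assumes "Q \<in> Prob_dec (n * l)" "s \<in> Prob l" "majorizes (n * l) Q (tensor l p s)"
  shows "majorizes n (coarse_grain l Q) p"
  unfolding majorizes_def
proof (intro allI impI)
  fix k assume "k \<le> n"
  have dec: "antimono_on {..<n * l} Q" using assms(1) by (simp add: Prob_dec_iff)
  have "k * l \<le> n * l" using \<open>k \<le> n\<close> by simp
  have "topk n p k \<le> topk (n * l) (tensor l p s) (k * l)"
    using assms(2) \<open>k \<le> n\<close> by (rule topk_le_topk_tensor)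
  also have "\<dots> \<le> topk (n * l) Q (k * l)"
    using assms(3) \<open>k * l \<le> n * l\<close> by (simp add: majorizes_def)
  also have "\<dots> = topk n (coarse_grain l Q) k"
    using topk_eq_sum_lessThan[OF dec \<open>k * l \<le> n * l\<close>]
      topk_eq_sum_lessThan[OF antimono_coarse_grain[OF dec] \<open>k \<le> n\<close>]
    by (simp add: sum_coarse_grain)
  finally show "topk n p k \<le> topk n (coarse_grain l Q) k" .
qed

lemma refine_block: "j < l \<Longrightarrow> refine l R (i * l + j) = R i / l"
  by (simp add: refine_def)

lemma sum_refine: "0 < l \<Longrightarrow> sum (refine l R) {..<k * l} = sum R {..<k}"
  by (simp add: sum_lessThan_mult refine_block)

lemma antimono_refine:
  assumes dec: "antimono_on {..<n} R"
  shows "antimono_on {..<n * l} (refine l R)"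
proof (rule monotone_onI)
  fix i j assume "i \<in> {..<n * l}" "j \<in> {..<n * l}" "i \<le> j"
  then have "R (j div l) \<le> R (i div l)"
    by (intro monotone_onD[OF dec]) (auto simp: div_le_mono less_mult_imp_div_less)
  then show "refine l R j \<le> refine l R i"
    by (simp add: refine_def divide_right_mono)
qed

lemma refine_Prob_dec:
  assumes "0 < l" "R \<in> Prob_dec n"
  shows "refine l R \<in> Prob_dec (n * l)"
proof -
  have "0 \<le> refine l R k" if "k < n * l" for k
  proof -
    have "k div l < n" using that by (simp add: less_mult_imp_div_less)
    then show ?thesis using assms Prob_nonneg[of R n "k div l"] by (simp add: refine_def Prob_dec_iff)
  qed
  then show ?thesis
    using assms antimono_refine[of n R l] sum_refine[OF assms(1), of R n]
    by (simp add: Prob_dec_iff Prob_def)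
qed

lemma entropy_refine:
  assumes "0 < l" "R \<in> Prob n"
  shows "entropy (n * l) (refine l R) = entropy n R + ln l"
proof -
  have "R i * ln (R i / l) = R i * ln (R i) - R i * ln l" if "i < n" for i
    using assms Prob_nonneg[OF assms(2) that]
    by (cases "R i = 0") (simp_all add: ln_div algebra_simps)
  then have "(\<Sum>k<n * l. refine l R k * ln (refine l R k)) = (\<Sum>i<n. R i * ln (R i) - R i * ln l)"
    using assms(1) by (simp add: sum_lessThan_mult refine_block)
  also have "\<dots> = (\<Sum>i<n. R i * ln (R i)) - ln l"
    using assms(2) by (simp add: sum_subtractf sum_distrib_right[symmetric] Prob_sum)
  finally show ?thesis by (simp add: entropy_def)
qed

lemma prefix_mean_ge_mean:
  fixes c :: "nat \<Rightarrow> real"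
  assumes dec: "antimono_on {..<l} c" and "b \<le> l"
  shows "real b * sum c {..<l} \<le> real l * sum c {..<b}"
proof -
  have "0 \<le> (\<Sum>j<b. \<Sum>i\<in>{b..<l}. c j - c i)"
    by (intro sum_nonneg) (auto intro: monotone_onD[OF dec] simp: diff_ge_0_iff_ge)
  also have "\<dots> = (\<Sum>j<b. \<Sum>i<l. c j - c i) - (\<Sum>j<b. \<Sum>i<b. c j - c i)"
    by (simp add: sum_lessThan_split[OF \<open>b \<le> l\<close>] sum_subtractf[symmetric])
  also have "\<dots> = real l * sum c {..<b} - real b * sum c {..<l}"
    by (simp add: sum_subtractf sum_distrib_left sum_distrib_right)
  finally show ?thesis by simp
qed

lemma majorizes_refine_coarse_grain:
  assumes "0 < l" and dec: "antimono_on {..<n * l} Q"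
  shows "majorizes (n * l) Q (refine l (coarse_grain l Q))"
  unfolding majorizes_def
proof (intro allI impI)
  fix K assume "K \<le> n * l"
  let ?R = "coarse_grain l Q"
  define a b where "a = K div l" and "b = K mod l"
  have K: "K = a * l + b" and "b < l" using \<open>0 < l\<close> by (simp_all add: a_def b_def)
  have "(\<Sum>j<b. refine l ?R (a * l + j)) \<le> (\<Sum>j<b. Q (a * l + j))"
  proof (cases "b = 0")
    case False
    with \<open>K \<le> n * l\<close> K have "a * l < n * l" by linarith
    then have "a < n" by simp
    then have "antimono_on {..<l} (\<lambda>j. Q (a * l + j))"
      using block_index_less[of a n _ l] by (intro monotone_onI monotone_onD[OF dec]) auto
    from prefix_mean_ge_mean[OF this less_imp_le[OF \<open>b < l\<close>]]
    have "real b * ?R a \<le> real l * (\<Sum>j<b. Q (a * l + j))"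
      by (simp add: coarse_grain_def)
    moreover have "(\<Sum>j<b. refine l ?R (a * l + j)) = real b * ?R a / l"
      using \<open>b < l\<close> by (simp add: refine_block)
    ultimately show ?thesis
      using \<open>0 < l\<close> by (simp add: pos_divide_le_eq mult.commute)
  qed simp
  then have "sum (refine l ?R) {..<K} \<le> sum Q {..<K}"
    using sum_refine[OF \<open>0 < l\<close>, of ?R a] by (simp add: K sum_lessThan_add sum_coarse_grain)
  then show "topk (n * l) (refine l ?R) K \<le> topk (n * l) Q K"
    using topk_eq_sum_lessThan[OF dec \<open>K \<le> n * l\<close>]
      topk_eq_sum_lessThan[OF antimono_refine[OF antimono_coarse_grain[OF dec]] \<open>K \<le> n * l\<close>]
    by simp
qed

theorem mainTheorem18:
  fixes l m n :: nat and p :: "nat \<Rightarrow> nat \<Rightarrow> real" and s :: "nat \<Rightarrow> real"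
  assumes "\<And>x. x \<in> {1..m} \<Longrightarrow> p x \<in> Prob n"
    and "s \<in> Prob l"
  shows "entropy (n * l) (join (n * l) ((\<lambda>x. tensor l (p x) s) ` {1..m}))
           \<le> ln (real l) + entropy n (join n (p ` {1..m}))"
proof -
  have "0 < l" using assms(2) by (rule Prob_length_pos)
  show ?thesis
  proof (cases "n = 0")
    case True
    with \<open>0 < l\<close> show ?thesis by (simp add: entropy_def)
  next
    case False
    let ?AQ = "(\<lambda>x. tensor l (p x) s) ` {1..m}" and ?AP = "p ` {1..m}"
    let ?Q = "join (n * l) ?AQ" and ?P = "join n ?AP"
    have Q: "is_join (n * l) ?AQ ?Q"
      using False \<open>0 < l\<close> assms by (intro is_join_join) (auto intro: tensor_Prob)
    have P: "is_join n ?AP ?P"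
      using False assms by (intro is_join_join) auto
    have Q_dec: "?Q \<in> Prob_dec (n * l)" using Q by (simp add: is_join_def)
    define R where "R = coarse_grain l ?Q"
    have R: "R \<in> Prob_dec n" unfolding R_def using Q_dec by (rule coarse_grain_Prob_dec)
    have "majorizes n R a" if "a \<in> ?AP" for a
      using that Q Q_dec assms(2) by (auto simp: R_def is_join_def intro: coarse_grain_majorizes)
    then have "majorizes n R ?P" using P R by (simp add: is_join_def Prob_dec_iff)
    then have "entropy n R \<le> entropy n ?P"
      using P R by (intro entropy_le_if_majorizes) (simp_all add: is_join_def)
    moreover have "entropy (n * l) ?Q \<le> entropy (n * l) (refine l R)"
      using Q_dec refine_Prob_dec[OF \<open>0 < l\<close> R] majorizes_refine_coarse_grain[OF \<open>0 < l\<close>]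
      by (intro entropy_le_if_majorizes) (simp_all add: R_def Prob_dec_iff)
    moreover have "entropy (n * l) (refine l R) = entropy n R + ln l"
      using \<open>0 < l\<close> R by (simp add: entropy_refine Prob_dec_iff)
    ultimately show ?thesis by simp
  qed
qed

end
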